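(* Let $n\ge1$, let $\lambda^1,\lambda^2$ be partitions with $|\lambda^1|+|\lambda^2|=n$, and let $H=H_{\lambda^1,\lambda^2}\subset G_n$. If $$\big\langle \mathrm{Res}^{G_n}_{H}\chi_n,\ \mathrm{Res}^{G_n}_{H}\varepsilon_n\cdot\varepsilon\cdot\psi\big\rangle_H\neq 0,$$ then every part of $\lambda^1$ and every part of $\lambda^2$ is a power of $2$ (with $1=2^0$ allowed).
   Context: $G_n$ is the signed permutation group (bijections of $\{\pm1,\dots,\pm n\}$ commuting with negation, viewed as $n\times n$ signed permutation matrices). $g\in G_n$ satisfies condition (L) if for every $i$ the points $i$ and $-i$ lie in different orbits of $\langle g\rangle$ on $\{\pm1,\dots,\pm n\}$; $\chi_n$ is the indicator function of (L) on $G_n$. $\varepsilon_n(g)$ is the sign of the underlying permutation of $g$ (signs forgotten). For $v\ge1$ let $g_v$ be the $v\times v$ cyclic permutation matrix with $(g_v)_{i+1,i}=1$ (indices mod $v$); the block group $\mathcal{B}_{v,m}\cong(\mu_2\times\mu_v)^m\rtimes S_m$ consists of $(s_1,a_1,\dots,s_m,a_m;\sigma)$ with $s_i\in\{\pm1\}$, $a_i\in\mathbb{Z}/v$, $\sigma\in S_m$, realized as the $vm\times vm$ matrix whose $(\sigma(i),i)$ $v\times v$ block is $s_ig_v^{a_i}$. For a partition $\lambda$ let $m_v(\lambda)$ be the multiplicity of $v$. $H_{\lambda^1,\lambda^2}$ is the subgroup of $G_n$ embedded block-diagonally as $\prod_{v: m_v(\lambda^1)>0}\mathcal{B}_{v,m_v(\lambda^1)}\times\prod_{v:m_v(\lambda^2)>0}\mathcal{B}_{v,m_v(\lambda^2)}$.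 On $H$, $\psi$ is the product over all blocks of $\omega_v^{a_1+\dots+a_m}$ ($\omega_v=e^{2\pi i/v}$), and $\varepsilon$ is the product of $\operatorname{sgn}(\sigma)$ over the blocks coming from $\lambda^1$ only. $\langle\alpha,\beta\rangle_H=\frac1{|H|}\sum_{h\in H}\alpha(h)\overline{\beta(h)}$. *)

theory Defs
  imports Complex_Main "HOL-Library.Multiset" "HOL-Combinatorics.Permutations"
begin

(* Signed permutations of {+-1,...,+-n} are represented as functions g :: int => int
   with g (-x) = - g x (and g fixing everything outside {+-1..+-n}). *)

(* condition (L): i and -i lie in different orbits of <g> (g has finite order,
   so the orbit of i under <g> is {(g^^k) i | k :: nat}) *)
definition chi :: "nat \<Rightarrow> (int \<Rightarrow> int) \<Rightarrow> bool" where
  "chi n g \<longleftrightarrow> (\<forall>i\<in>{1..int n}. \<forall>k::nat. (g ^^ k) i \<noteq> - i)"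

definition underlying_perm :: "nat \<Rightarrow> (int \<Rightarrow> int) \<Rightarrow> nat \<Rightarrow> nat" where
  "underlying_perm n g x = (if 1 \<le> x \<and> x \<le> n then nat \<bar>g (int x)\<bar> else x)"

definition eps_n :: "nat \<Rightarrow> (int \<Rightarrow> int) \<Rightarrow> int" where
  "eps_n n g = sign (underlying_perm n g)"

(* an element (s_1,a_1,...,s_m,a_m; sigma) of B_{v,m}, with 0-based indices i < m *)
type_synonym belt = "(nat \<Rightarrow> int) \<times> (nat \<Rightarrow> nat) \<times> (nat \<Rightarrow> nat)"

definition Bset :: "nat \<Rightarrow> nat \<Rightarrow> belt set" where
  "Bset v m = {(s, a, \<sigma>). (\<forall>i<m. s i \<in> {-1, 1}) \<and> (\<forall>i\<ge>m. s i = 1)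
       \<and> (\<forall>i<m. a i < v) \<and> (\<forall>i\<ge>m. a i = 0) \<and> \<sigma> permutes {..<m}}"

(* action of the block matrix: basis vector at (block i, position k) (0-based, local index
   t = i*v + k) goes to s_i times the basis vector at (block sigma(i), position k + a_i mod v),
   since block (sigma(i),i) is s_i g_v^{a_i} and g_v e_k = e_{k+1}.
   off is the offset of the block group on the diagonal; result is a signed global index. *)
definition act_block :: "nat \<Rightarrow> belt \<Rightarrow> nat \<Rightarrow> nat \<Rightarrow> int" where
  "act_block v h off t = (case h of (s, a, \<sigma>) \<Rightarrow>
      s (t div v) * int (off + \<sigma> (t div v) * v + (t mod v + a (t div v)) mod v + 1))"

(* block descriptors: (v, m_v, comes_from_lambda1) *)
definition blocks :: "nat multiset \<Rightarrow> nat multiset \<Rightarrow> (nat \<times> nat \<times> bool) list" where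
  "blocks l1 l2 =
     map (\<lambda>v. (v, count l1 v, True)) (sorted_list_of_set (set_mset l1)) @
     map (\<lambda>v. (v, count l2 v, False)) (sorted_list_of_set (set_mset l2))"

(* image of the positive index p (1-based) under the block-diagonal embedding *)
fun emb_pos :: "(nat \<times> nat \<times> bool) list \<Rightarrow> belt list \<Rightarrow> nat \<Rightarrow> nat \<Rightarrow> int" where
  "emb_pos ((v, m, b) # bs) (h # hs) off p =
     (if p \<le> off + v * m then act_block v h off (p - off - 1)
      else emb_pos bs hs (off + v * m) p)"
| "emb_pos _ _ off p = int p"

definition emb :: "(nat \<times> nat \<times> bool) list \<Rightarrow> belt list \<Rightarrow> int \<Rightarrow> int" where
  "emb bs hs x = (if x > 0 then emb_pos bs hs 0 (nat x)
                  else if x < 0 then - emb_pos bs hs 0 (nat (- x)) else 0)"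

(* the group H_{lambda1,lambda2}, as the set of tuples of block elements *)
definition Hset :: "nat multiset \<Rightarrow> nat multiset \<Rightarrow> belt list set" where
  "Hset l1 l2 = listset (map (\<lambda>(v, m, b). Bset v m) (blocks l1 l2))"

definition psi :: "(nat \<times> nat \<times> bool) list \<Rightarrow> belt list \<Rightarrow> complex" where
  "psi bs hs = prod_list (map (\<lambda>((v, m, b), (s, a, \<sigma>)).
       cis (2 * pi / real v) ^ (\<Sum>i<m. a i)) (zip bs hs))"

definition epsH :: "(nat \<times> nat \<times> bool) list \<Rightarrow> belt list \<Rightarrow> int" where
  "epsH bs hs = prod_list (map (\<lambda>((v, m, b), (s, a, \<sigma>)).
       if b then sign \<sigma> else 1) (zip bs hs))"

definition inner_H :: "nat \<Rightarrow> nat multiset \<Rightarrow> nat multiset \<Rightarrow> complex" where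
  "inner_H n l1 l2 = (let bs = blocks l1 l2 in
     (1 / of_nat (card (Hset l1 l2))) *
     (\<Sum>h\<in>Hset l1 l2. (if chi n (emb bs h) then 1 else 0) *
        cnj (of_int (eps_n n (emb bs h)) * of_int (epsH bs h) * psi bs h)))"

definition is_partition :: "nat multiset \<Rightarrow> bool" where
  "is_partition l \<longleftrightarrow> 0 \<notin># l"

end

theory Submission
  imports Defs
begin

text \<open>Suppose a part \<open>v\<close> is not a power of two, say \<open>v = d * q\<close> with \<open>d\<close> a power of two and
  \<open>q > 1\<close> odd. Adding \<open>2 * d\<close> to the rotation exponent of the first belt of a \<open>v\<close>-block is a
  bijection of \<open>H\<close> which multiplies \<open>\<psi>\<close> by \<open>\<omega>\<^sub>v ^ (2 * d) \<noteq> 1\<close> and fixes the other factors of the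
  summand. Indeed \<open>\<epsilon>\<close> ignores exponents; the underlying permutation changes by a rotation of a
  segment of length \<open>v\<close> by \<open>2 * d\<close>, which is a square and hence even; and a point reaches its
  negative iff some return time of its belt under \<open>\<sigma>\<close> carries sign \<open>-1\<close> and total exponent
  divisible by \<open>v\<close>, a property that survives the shift because one may pass to \<open>q\<close> times that
  return time, and \<open>v\<close> divides \<open>q * 2 * d\<close>. So the sum equals a nontrivial multiple of itself.\<close>

section \<open>Layout of the blocks\<close>

definition block_size :: "nat \<times> nat \<times> bool \<Rightarrow> nat" where
  "block_size x = (case x of (v, m, b) \<Rightarrow> v * m)"

definition block_offset :: "(nat \<times> nat \<times> bool) list \<Rightarrow> nat \<Rightarrow> nat" where
  "block_offset bs i = sum_list (map block_size (take i bs))"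

lemma block_offset_Cons_0 [simp]: "block_offset (x # bs) 0 = 0"
  by (simp add: block_offset_def)

lemma block_offset_Cons_Suc [simp]: "block_offset (x # bs) (Suc i) = block_size x + block_offset bs i"
  by (simp add: block_offset_def)

lemma block_offset_Suc:
  "i < length bs \<Longrightarrow> block_offset bs (Suc i) = block_offset bs i + block_size (bs ! i)"
  by (simp add: block_offset_def take_Suc_conv_app_nth)

lemma block_offset_mono: "i \<le> i' \<Longrightarrow> block_offset bs i \<le> block_offset bs i'"
proof -
  assume "i \<le> i'"
  then have "take i' bs = take i bs @ drop i (take i' bs)"
    by (metis append_take_drop_id min.absorb1 take_take)
  then show ?thesis unfolding block_offset_def by (metis le_add1 sum_list_append map_append)
qed

lemma block_offset_add_size_le:
  "i < i' \<Longrightarrow> i < length bs \<Longrightarrow> block_offset bs i + block_size (bs ! i) \<le> block_offset bs i'"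
  using block_offset_mono[of "Suc i" i' bs] block_offset_Suc[of i bs] by simp

lemma block_offset_add_size_le_total:
  "i < length bs \<Longrightarrow> block_offset bs i + block_size (bs ! i) \<le> sum_list (map block_size bs)"
  using block_offset_add_size_le[of i "length bs" bs] by (simp add: block_offset_def)

lemma block_index_unique:
  assumes "i < length bs" "i' < length bs"
    and "block_offset bs i < p" "p \<le> block_offset bs i + block_size (bs ! i)"
    and "block_offset bs i' < p" "p \<le> block_offset bs i' + block_size (bs ! i')"
  shows "i = i'"
  using block_offset_add_size_le[of i i' bs] block_offset_add_size_le[of i' i bs] assms
  by (cases i i' rule: linorder_cases) auto

lemma block_index_exists:
  assumes "off < p" "p \<le> off + sum_list (map block_size bs)"
  shows "\<exists>i<length bs. off + block_offset bs i < p \<and> p \<le> off + block_offset bs i + block_size (bs ! i)"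
  using assms
proof (induction bs arbitrary: off)
  case Nil
  then show ?case by simp
next
  case (Cons x bs)
  show ?case
  proof (cases "p \<le> off + block_size x")
    case True
    then show ?thesis using Cons.prems by (intro exI[of _ 0]) auto
  next
    case False
    then obtain i where "i < length bs" "off + block_size x + block_offset bs i < p"
        "p \<le> off + block_size x + block_offset bs i + block_size (bs ! i)"
      using Cons.IH[of "off + block_size x"] Cons.prems by (auto simp: add.assoc)
    then show ?thesis by (intro exI[of _ "Suc i"]) (auto simp: add.assoc)
  qed
qed

lemma slot_less: "j < m \<Longrightarrow> q < (v::nat) \<Longrightarrow> j * v + q < v * m"
proof -
  assume "j < m" "q < v"
  then have "j * v + q < (j + 1) * v" by simp
  also have "\<dots> \<le> m * v" using \<open>j < m\<close> by (intro mult_right_mono) auto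
  finally show ?thesis by (simp add: mult.commute)
qed

lemma slot_decomp:
  fixes v m t :: nat
  assumes "t < v * m"
  obtains j q where "j < m" "q < v" "t = j * v + q"
proof
  have "0 < v" using assms by (cases v) auto
  then show "t div v < m" "t mod v < v"
    using assms by (simp_all add: div_less_iff_less_mult mult.commute)
  show "t = t div v * v + t mod v" by simp
qed

lemma emb_pos_block:
  assumes "length hs = length bs" "i < length bs" "bs ! i = (v, m, b)"
    and "off + block_offset bs i < p" "p \<le> off + block_offset bs i + v * m"
  shows "emb_pos bs hs off p = act_block v (hs ! i) (off + block_offset bs i) (p - (off + block_offset bs i) - 1)"
  using assms
proof (induction bs arbitrary: hs i off)
  case Nil
  then show ?case by simp
next
  case (Cons x bs)
  obtain h hs' where hs: "hs = h # hs'" using Cons.prems(1) by (cases hs) auto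
  obtain v0 m0 b0 where x: "x = (v0, m0, b0)" by (cases x)
  show ?case
  proof (cases i)
    case 0
    then show ?thesis using Cons.prems hs x by simp
  next
    case (Suc i')
    have "off + v0 * m0 < p" using Cons.prems Suc x by (simp add: block_size_def)
    then show ?thesis
      using Cons.IH[of hs' i' "off + v0 * m0"] Cons.prems hs Suc x by (simp add: block_size_def add.assoc)
  qed
qed

lemma emb_pos_beyond_blocks:
  "off + sum_list (map block_size bs) < p \<Longrightarrow> emb_pos bs hs off p = int p"
proof (induction bs arbitrary: hs off)
  case Nil
  then show ?case by (cases hs) auto
next
  case (Cons x bs)
  obtain v0 m0 b0 where x: "x = (v0, m0, b0)" by (cases x)
  show ?case
    using Cons.prems Cons.IH[of "off + v0 * m0"] x
    by (cases hs) (simp_all add: block_size_def add.assoc)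
qed

lemma emb_neg: "emb bs hs (- x) = - emb bs hs x"
  by (simp add: emb_def)

lemma emb_of_nat: "0 < p \<Longrightarrow> emb bs hs (int p) = emb_pos bs hs 0 p"
  by (simp add: emb_def)

lemma emb_in_block:
  assumes "length hs = length bs" "i < length bs" "bs ! i = (v, m, b)" "t < v * m"
  shows "emb bs hs (int (block_offset bs i + 1 + t)) = act_block v (hs ! i) (block_offset bs i) t"
proof -
  have "emb bs hs (int (block_offset bs i + 1 + t)) = emb_pos bs hs 0 (block_offset bs i + 1 + t)"
    by (rule emb_of_nat) simp
  also have "\<dots> = act_block v (hs ! i) (block_offset bs i) t"
    using emb_pos_block[OF assms(1-3), of 0 "block_offset bs i + 1 + t"] assms(4) by simp
  finally show ?thesis .
qed

lemma emb_beyond_blocks: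
  "sum_list (map block_size bs) < p \<Longrightarrow> emb bs hs (int p) = int p"
  using emb_pos_beyond_blocks[of 0 bs p hs] emb_of_nat[of p bs hs] by simp

lemma funpow_emb_beyond_blocks:
  "sum_list (map block_size bs) < p \<Longrightarrow> (emb bs hs ^^ u) (int p) = int p"
  by (induction u) (simp_all add: emb_beyond_blocks)

definition block_tuples :: "(nat \<times> nat \<times> bool) list \<Rightarrow> belt list set" where
  "block_tuples bs = listset (map (\<lambda>(v, m, b). Bset v m) bs)"

lemma in_listset_iff:
  "hs \<in> listset As \<longleftrightarrow> length hs = length As \<and> (\<forall>i<length As. hs ! i \<in> As ! i)"
proof (induction As arbitrary: hs)
  case Nil
  then show ?case by auto
next
  case (Cons A As)
  then show ?case
    by (cases hs) (auto simp: set_Cons_def nth_Cons split: nat.splits)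
qed

lemma Hset_eq_block_tuples: "Hset l1 l2 = block_tuples (blocks l1 l2)"
  by (simp add: Hset_def block_tuples_def)

lemma block_tuples_iff:
  "hs \<in> block_tuples bs \<longleftrightarrow>
     length hs = length bs \<and> (\<forall>i<length bs. hs ! i \<in> (case bs ! i of (v, m, b) \<Rightarrow> Bset v m))"
  by (simp add: block_tuples_def in_listset_iff)

lemma block_tuples_length: "hs \<in> block_tuples bs \<Longrightarrow> length hs = length bs"
  by (simp add: block_tuples_iff)

lemma block_tuples_nth:
  "hs \<in> block_tuples bs \<Longrightarrow> i < length bs \<Longrightarrow> bs ! i = (v, m, b) \<Longrightarrow> hs ! i \<in> Bset v m"
  by (auto simp: block_tuples_iff)

lemma BsetD:
  assumes "(s, a, \<sigma>) \<in> Bset v m"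
  shows "\<sigma> permutes {..<m}" "\<And>i. i < m \<Longrightarrow> s i \<in> {-1, 1}" "\<And>i. i < m \<Longrightarrow> a i < v"
    "\<And>i. m \<le> i \<Longrightarrow> s i = 1" "\<And>i. m \<le> i \<Longrightarrow> a i = 0"
  using assms by (auto simp: Bset_def)

lemma emb_block_slot:
  assumes "length hs = length bs" "i < length bs" "bs ! i = (v, m, b)" "hs ! i = (s, a, \<sigma>)"
    and "j < m" "q < v"
  shows "emb bs hs (int (block_offset bs i + 1 + j * v + q)) =
           s j * int (block_offset bs i + 1 + \<sigma> j * v + (q + a j) mod v)"
  using emb_in_block[OF assms(1-3) slot_less[OF assms(5,6)]] assms(4,6)
  by (simp add: act_block_def add.assoc)

section \<open>Orbits of points and condition (L)\<close>

text \<open>Whether the point in position \<open>q\<close> of belt \<open>j\<close> of a block returns to its negative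
  under powers of the block element \<open>h\<close>; the answer does not depend on \<open>q\<close>.\<close>

definition negated_return :: "nat \<Rightarrow> belt \<Rightarrow> nat \<Rightarrow> bool" where
  "negated_return v h j = (case h of (s, a, \<sigma>) \<Rightarrow>
     \<exists>u. (\<Prod>w<u. s ((\<sigma> ^^ w) j)) = -1 \<and> (\<sigma> ^^ u) j = j \<and> int v dvd (\<Sum>w<u. int (a ((\<sigma> ^^ w) j))))"

locale block_action =
  fixes g :: "int \<Rightarrow> int" and off v m :: nat and s :: "nat \<Rightarrow> int" and a \<sigma> :: "nat \<Rightarrow> nat"
  assumes g_neg: "\<And>x. g (- x) = - g x"
    and g_slot: "\<And>j q. j < m \<Longrightarrow> q < v \<Longrightarrow>
                   g (int (off + 1 + j * v + q)) = s j * int (off + 1 + \<sigma> j * v + (q + a j) mod v)"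
    and perm: "\<sigma> permutes {..<m}"
    and signs: "\<And>i. i < m \<Longrightarrow> s i \<in> {-1, 1}"
begin

lemma funpow_slot:
  assumes "j < m" "q < v"
  shows "(g ^^ u) (int (off + 1 + j * v + q)) =
           (\<Prod>w<u. s ((\<sigma> ^^ w) j)) * int (off + 1 + (\<sigma> ^^ u) j * v + (q + (\<Sum>w<u. a ((\<sigma> ^^ w) j))) mod v)
     \<and> (\<Prod>w<u. s ((\<sigma> ^^ w) j)) \<in> {-1, 1} \<and> (\<sigma> ^^ u) j < m"
proof (induction u)
  case 0
  then show ?case using assms by simp
next
  case (Suc u)
  define S where "S = (\<Prod>w<u. s ((\<sigma> ^^ w) j))"
  define A where "A = (\<Sum>w<u. a ((\<sigma> ^^ w) j))"
  define k where "k = (\<sigma> ^^ u) j"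
  have IH: "(g ^^ u) (int (off + 1 + j * v + q)) = S * int (off + 1 + k * v + (q + A) mod v)"
      "S \<in> {-1, 1}" "k < m"
    using Suc.IH by (auto simp: S_def A_def k_def)
  have g_sign: "g (S * x) = S * g x" for x
    using \<open>S \<in> {-1, 1}\<close> g_neg by auto
  have "(g ^^ Suc u) (int (off + 1 + j * v + q)) = S * g (int (off + 1 + k * v + (q + A) mod v))"
    using IH(1) g_sign by simp
  also have "\<dots> = (S * s k) * int (off + 1 + \<sigma> k * v + (q + (A + a k)) mod v)"
    using g_slot[OF IH(3), of "(q + A) mod v"] assms(2) by (simp add: mod_add_left_eq add.assoc)
  finally show ?case
    using IH(2) signs[OF IH(3)] permutes_in_image[OF perm, of k] IH(3)
    by (auto simp: S_def A_def k_def)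
qed

end

lemma signed_slot_eq_neg_iff:
  fixes S :: int and off k j q v A :: nat
  assumes "S \<in> {-1, 1}" "q < v"
  shows "S * int (off + 1 + k * v + (q + A) mod v) = - int (off + 1 + j * v + q) \<longleftrightarrow>
           S = -1 \<and> k = j \<and> v dvd A"
proof -
  have neg: "S * int x = - int y \<longleftrightarrow> S = -1 \<and> x = y" if "0 < y" for x y :: nat
  proof -
    consider "S = -1" | "S = 1" using assms(1) by auto
    then show ?thesis using that by cases auto
  qed
  have "S * int (off + 1 + k * v + (q + A) mod v) = - int (off + 1 + j * v + q) \<longleftrightarrow>
               S = -1 \<and> k * v + (q + A) mod v = j * v + q"
    using neg[of "off + 1 + j * v + q" "off + 1 + k * v + (q + A) mod v"] by simp
  also have "k * v + (q + A) mod v = j * v + q \<longleftrightarrow> k = j \<and> (q + A) mod v = q"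
  proof
    assume eq: "k * v + (q + A) mod v = j * v + q"
    have "0 < v" using assms(2) by simp
    then show "k = j \<and> (q + A) mod v = q"
      using arg_cong[OF eq, of "\<lambda>x. x div v"] arg_cong[OF eq, of "\<lambda>x. x mod v"] assms(2) by simp
  qed simp
  also have "(q + A) mod v = q \<longleftrightarrow> v dvd A"
    using assms(2) by (metis add_diff_cancel_left' le_add1 mod_eq_dvd_iff_nat mod_if)
  finally show ?thesis .
qed

lemma (in block_action) funpow_slot_eq_neg_iff:
  assumes "j < m" "q < v"
  shows "(\<exists>u. (g ^^ u) (int (off + 1 + j * v + q)) = - int (off + 1 + j * v + q)) \<longleftrightarrow>
           negated_return v (s, a, \<sigma>) j"
proof -
  have "(g ^^ u) (int (off + 1 + j * v + q)) = - int (off + 1 + j * v + q) \<longleftrightarrow>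
          (\<Prod>w<u. s ((\<sigma> ^^ w) j)) = -1 \<and> (\<sigma> ^^ u) j = j \<and> int v dvd (\<Sum>w<u. int (a ((\<sigma> ^^ w) j)))"
    for u
    using funpow_slot[OF assms, of u]
      signed_slot_eq_neg_iff[OF _ assms(2), of _ off "(\<sigma> ^^ u) j" "\<Sum>w<u. a ((\<sigma> ^^ w) j)" j]
    by (simp add: of_nat_dvd_iff flip: of_nat_sum)
  then show ?thesis by (simp add: negated_return_def)
qed

lemma emb_funpow_eq_neg_iff:
  assumes hs: "hs \<in> block_tuples bs" and i: "i < length bs" "bs ! i = (v, m, b)"
    and "j < m" "q < v"
  shows "(\<exists>u. (emb bs hs ^^ u) (int (block_offset bs i + 1 + j * v + q)) =
                - int (block_offset bs i + 1 + j * v + q)) \<longleftrightarrow> negated_return v (hs ! i) j"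
proof -
  obtain s a \<sigma> where h: "hs ! i = (s, a, \<sigma>)" by (cases "hs ! i")
  have B: "(s, a, \<sigma>) \<in> Bset v m" using block_tuples_nth[OF hs i] h by simp
  interpret block_action "emb bs hs" "block_offset bs i" v m s a \<sigma>
    using emb_neg emb_block_slot[OF block_tuples_length[OF hs] i h] BsetD(1,2)[OF B]
    by unfold_locales auto
  show ?thesis using funpow_slot_eq_neg_iff[OF assms(4,5)] h by simp
qed

lemma chi_iff: "chi n g \<longleftrightarrow> (\<forall>p\<in>{1..n}. \<forall>u. (g ^^ u) (int p) \<noteq> - int p)"
proof -
  have "{1..int n} = int ` {1..n}" by (simp add: image_int_atLeastAtMost)
  then show ?thesis unfolding chi_def by simp
qed

lemma chi_emb_cong:
  assumes hs: "hs \<in> block_tuples bs" and hs': "hs' \<in> block_tuples bs"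
    and same: "\<And>i v m b j. i < length bs \<Longrightarrow> bs ! i = (v, m, b) \<Longrightarrow> j < m \<Longrightarrow>
                 negated_return v (hs ! i) j \<longleftrightarrow> negated_return v (hs' ! i) j"
  shows "chi n (emb bs hs) = chi n (emb bs hs')"
proof -
  have "(\<exists>u. (emb bs hs ^^ u) (int p) = - int p) \<longleftrightarrow> (\<exists>u. (emb bs hs' ^^ u) (int p) = - int p)"
    if p: "p \<in> {1..n}" for p
  proof (cases "p \<le> sum_list (map block_size bs)")
    case True
    then obtain i where i: "i < length bs" "block_offset bs i < p" "p \<le> block_offset bs i + block_size (bs ! i)"
      using block_index_exists[of 0 p bs] p by auto
    obtain v m b where bi: "bs ! i = (v, m, b)" by (cases "bs ! i")
    have "p - block_offset bs i - 1 < v * m" using i bi by (simp add: block_size_def)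
    then obtain j q where jq: "j < m" "q < v" "p = block_offset bs i + 1 + j * v + q"
      by (rule slot_decomp) (use i(2) in simp)
    show ?thesis
      using emb_funpow_eq_neg_iff[OF hs i(1) bi jq(1,2)] emb_funpow_eq_neg_iff[OF hs' i(1) bi jq(1,2)]
        same[OF i(1) bi jq(1)] jq(3) by simp
  next
    case False
    then show ?thesis using funpow_emb_beyond_blocks[of bs p] p by simp
  qed
  then show ?thesis unfolding chi_iff by blast
qed

section \<open>Shifting the rotation of the first belt of a block\<close>

lemma sum_lessThan_add: "(\<Sum>w<u + (n::nat). f w) = (\<Sum>w<u. f w) + (\<Sum>w<n. f (u + w))"
  by (induction n) (simp_all add: add.assoc)

lemma prod_lessThan_add: "(\<Prod>w<u + (n::nat). f w) = (\<Prod>w<u. f w) * (\<Prod>w<n. f (u + w))"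
  by (induction n) (simp_all add: mult.assoc)

lemma sum_lessThan_mult_periodic:
  fixes f :: "nat \<Rightarrow> 'a::comm_semiring_1"
  assumes "\<And>w. f (u + w) = f w"
  shows "(\<Sum>w<u * k. f w) = of_nat k * (\<Sum>w<u. f w)"
proof (induction k)
  case (Suc k)
  have "(\<Sum>w<u * Suc k. f w) = (\<Sum>w<u. f w) + (\<Sum>w<u * k. f w)"
    using sum_lessThan_add[of f u "u * k"] assms by simp
  then show ?case using Suc by (simp add: algebra_simps)
qed simp

lemma prod_lessThan_mult_periodic:
  fixes f :: "nat \<Rightarrow> 'a::comm_monoid_mult"
  assumes "\<And>w. f (u + w) = f w"
  shows "(\<Prod>w<u * k. f w) = (\<Prod>w<u. f w) ^ k"
proof (induction k)
  case (Suc k)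
  have "(\<Prod>w<u * Suc k. f w) = (\<Prod>w<u. f w) * (\<Prod>w<u * k. f w)"
    using prod_lessThan_add[of f u "u * k"] assms by simp
  then show ?case using Suc by simp
qed simp

text \<open>Passing from a return time \<open>u\<close> to its odd multiple \<open>b * u\<close> keeps the sign \<open>-1\<close>, while
  every change \<open>\<delta>\<close> of the exponents with \<open>v dvd b * \<delta>\<close> disappears modulo \<open>v\<close>.\<close>

lemma negated_return_perturb:
  fixes \<delta> :: "nat \<Rightarrow> int"
  assumes "odd b" and b_delta: "\<And>i. int v dvd int b * \<delta> i"
    and a': "\<And>i. int v dvd int (a' i) - int (a i) - \<delta> i"
    and "negated_return v (s, a, \<sigma>) j"
  shows "negated_return v (s, a', \<sigma>) j"
proof -
  obtain u where u: "(\<Prod>w<u. s ((\<sigma> ^^ w) j)) = -1" "(\<sigma> ^^ u) j = j"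
      "int v dvd (\<Sum>w<u. int (a ((\<sigma> ^^ w) j)))"
    using assms(4) by (auto simp: negated_return_def)
  have per: "(\<sigma> ^^ (u + w)) j = (\<sigma> ^^ w) j" for w
    using u(2) by (simp add: funpow_add add.commute[of u])
  let ?orb = "\<lambda>f w. f ((\<sigma> ^^ w) j)"
  have "(\<Prod>w<u * b. s ((\<sigma> ^^ w) j)) = -1"
    using prod_lessThan_mult_periodic[of "?orb s" u b] per u(1) \<open>odd b\<close> by simp
  moreover have "(\<sigma> ^^ (u * b)) j = j"
    using u(2) by (induction b) (simp_all add: funpow_add mult_Suc_right)
  moreover have "int v dvd (\<Sum>w<u * b. int (a' ((\<sigma> ^^ w) j)))"
  proof -
    have "(\<Sum>w<u * b. int (a' ((\<sigma> ^^ w) j))) =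
            (\<Sum>w<u * b. int (a' ((\<sigma> ^^ w) j)) - int (a ((\<sigma> ^^ w) j)) - \<delta> ((\<sigma> ^^ w) j))
          + int b * (\<Sum>w<u. int (a ((\<sigma> ^^ w) j))) + (\<Sum>w<u. int b * \<delta> ((\<sigma> ^^ w) j))"
      using sum_lessThan_mult_periodic[of "\<lambda>w. int (a ((\<sigma> ^^ w) j))" u b]
        sum_lessThan_mult_periodic[of "?orb \<delta>" u b] per
      by (simp add: sum_subtractf sum_distrib_left)
    then show ?thesis using a' b_delta u(3) by (simp add: dvd_sum)
  qed
  ultimately show ?thesis by (auto simp: negated_return_def)
qed

definition shift_a0 :: "nat \<Rightarrow> nat \<Rightarrow> belt \<Rightarrow> belt" where
  "shift_a0 v c h = (case h of (s, a, \<sigma>) \<Rightarrow> (s, a(0 := (a 0 + c) mod v), \<sigma>))"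

definition shift_tuple :: "nat \<Rightarrow> nat \<Rightarrow> nat \<Rightarrow> belt list \<Rightarrow> belt list" where
  "shift_tuple i0 v c hs = hs[i0 := shift_a0 v c (hs ! i0)]"

lemma shift_a0_in_Bset:
  assumes "h \<in> Bset v m" "0 < m"
  shows "shift_a0 v c h \<in> Bset v m"
proof -
  obtain s a \<sigma> where h: "h = (s, a, \<sigma>)" by (cases h)
  have "0 < v" using BsetD(3)[of s a \<sigma> v m 0] assms h by simp
  then show ?thesis using assms h by (auto simp: Bset_def shift_a0_def)
qed

lemma shift_a0_shift_a0:
  assumes "h \<in> Bset v m" "0 < m" "v dvd c + c'"
  shows "shift_a0 v c' (shift_a0 v c h) = h"
proof -
  obtain s a \<sigma> where h: "h = (s, a, \<sigma>)" by (cases h)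
  have "a 0 < v" using BsetD(3)[of s a \<sigma> v m 0] assms h by simp
  moreover have "((a 0 + c) mod v + c') mod v = (a 0 + (c + c')) mod v"
    by (simp add: mod_add_left_eq add.assoc)
  ultimately show ?thesis using assms(3) by (auto simp: h shift_a0_def)
qed

lemma shift_tuple_in_block_tuples:
  assumes "hs \<in> block_tuples bs" "i0 < length bs" "bs ! i0 = (v, m, b)" "0 < m"
  shows "shift_tuple i0 v c hs \<in> block_tuples bs"
  using assms shift_a0_in_Bset[OF block_tuples_nth[OF assms(1-3)] assms(4)]
  by (auto simp: block_tuples_iff shift_tuple_def nth_list_update)

lemma bij_betw_shift_tuple:
  assumes "i0 < length bs" "bs ! i0 = (v, m, b)" "0 < m" "0 < v"
  shows "bij_betw (shift_tuple i0 v c) (block_tuples bs) (block_tuples bs)"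
proof (rule bij_betw_byWitness[where f' = "shift_tuple i0 v ((v - 1) * c)"])
  have "shift_tuple i0 v c' (shift_tuple i0 v c hs) = hs"
    if "hs \<in> block_tuples bs" "v dvd c + c'" for hs c c'
    using shift_a0_shift_a0[OF block_tuples_nth[OF that(1) assms(1,2)] assms(3) that(2)]
      block_tuples_length[OF that(1)] assms(1)
    by (simp add: shift_tuple_def)
  moreover have "c + (v - 1) * c = v * c" using assms(4) by (cases v) simp_all
  then have "v dvd c + (v - 1) * c" "v dvd (v - 1) * c + c" by (simp_all add: add.commute)
  ultimately show "\<forall>hs\<in>block_tuples bs. shift_tuple i0 v ((v - 1) * c) (shift_tuple i0 v c hs) = hs"
      "\<forall>hs\<in>block_tuples bs. shift_tuple i0 v c (shift_tuple i0 v ((v - 1) * c) hs) = hs"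
    by blast+
  show "shift_tuple i0 v c ` block_tuples bs \<subseteq> block_tuples bs"
      "shift_tuple i0 v ((v - 1) * c) ` block_tuples bs \<subseteq> block_tuples bs"
    using shift_tuple_in_block_tuples[OF _ assms(1-3)] by blast+
qed

lemma negated_return_shift_a0:
  assumes "odd q" "v = d * q"
  shows "negated_return v (shift_a0 v (2 * d) h) j \<longleftrightarrow> negated_return v h j"
proof -
  obtain s a \<sigma> where h: "h = (s, a, \<sigma>)" by (cases h)
  define a' where "a' = a(0 := (a 0 + 2 * d) mod v)"
  define \<delta> where "\<delta> i = (if i = 0 then int (2 * d) else 0)" for i :: nat
  have mod_dvd: "int v dvd int ((x + c) mod v) - int x - int c" for x c :: nat
  proof -
    have "int v dvd int (x + c) mod int v - int (x + c)"
      by (simp only: mod_eq_dvd_iff[symmetric] mod_mod_trivial)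
    then show ?thesis by (simp add: zmod_int diff_diff_eq)
  qed
  have fwd: "\<And>i. int v dvd int (a' i) - int (a i) - \<delta> i"
    using mod_dvd[of "a 0" "2 * d"] by (simp add: a'_def \<delta>_def)
  have bwd: "\<And>i. int v dvd int (a i) - int (a' i) - (- \<delta> i)"
    subgoal for i using fwd[of i] dvd_minus_iff[of "int v" "int (a' i) - int (a i) - \<delta> i"] by (simp add: algebra_simps)
    done
  have q_delta: "\<And>i. int v dvd int q * \<delta> i" "\<And>i. int v dvd int q * (- \<delta> i)"
    using assms(2) by (simp_all add: \<delta>_def)
  have shifted: "shift_a0 v (2 * d) h = (s, a', \<sigma>)" by (simp add: h shift_a0_def a'_def)
  have "negated_return v (s, a, \<sigma>) j \<Longrightarrow> negated_return v (s, a', \<sigma>) j"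
    by (rule negated_return_perturb[OF assms(1) q_delta(1) fwd])
  moreover have "negated_return v (s, a', \<sigma>) j \<Longrightarrow> negated_return v (s, a, \<sigma>) j"
    by (rule negated_return_perturb[OF assms(1) q_delta(2) bwd])
  ultimately show ?thesis unfolding shifted unfolding h by (rule iffI[rotated])
qed

lemma chi_shift_tuple:
  assumes hs: "hs \<in> block_tuples bs" and i0: "i0 < length bs" "bs ! i0 = (v, m, b)" "0 < m"
    and "odd q" "v = d * q"
  shows "chi n (emb bs (shift_tuple i0 v (2 * d) hs)) = chi n (emb bs hs)"
proof (rule chi_emb_cong[OF shift_tuple_in_block_tuples[OF hs i0] hs])
  fix i v' m' b' j assume "i < length bs" "bs ! i = (v', m', b')"
  show "negated_return v' (shift_tuple i0 v (2 * d) hs ! i) j \<longleftrightarrow> negated_return v' (hs ! i) j"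
  proof (cases "i = i0")
    case True
    then have "v' = v" using i0(2) \<open>bs ! i = (v', m', b')\<close> by simp
    then show ?thesis
      using True negated_return_shift_a0[OF assms(5,6)] i0(1) block_tuples_length[OF hs]
      by (simp add: shift_tuple_def)
  next
    case False
    then show ?thesis by (simp add: shift_tuple_def)
  qed
qed

definition belt_perm :: "nat \<Rightarrow> (nat \<Rightarrow> nat) \<Rightarrow> (nat \<Rightarrow> nat) \<Rightarrow> nat \<Rightarrow> nat" where
  "belt_perm v a \<sigma> t = \<sigma> (t div v) * v + (t mod v + a (t div v)) mod v"

lemma act_block_eq: "act_block v (s, a, \<sigma>) off t = s (t div v) * int (off + 1 + belt_perm v a \<sigma> t)"
  by (simp add: act_block_def belt_perm_def)

lemma mod_add_right_cancel_less:
  fixes q q' A v :: nat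
  assumes "(q + A) mod v = (q' + A) mod v" "q < v" "q' < v"
  shows "q = q'"
proof -
  have "(int q + int A) mod int v = (int q' + int A) mod int v"
    using arg_cong[OF assms(1), of int] by (simp add: zmod_int)
  then have "int q mod int v = int q' mod int v"
    by (metis add_diff_cancel_right' mod_diff_left_eq)
  then show ?thesis using assms(2,3) by (simp add: zmod_int)
qed

lemma belt_perm_less:
  assumes "\<sigma> permutes {..<m}" "t < v * m"
  shows "belt_perm v a \<sigma> t < v * m"
proof -
  obtain j q where jq: "j < m" "q < v" "t = j * v + q" using assms(2) by (rule slot_decomp)
  have "\<sigma> j < m" using permutes_in_image[OF assms(1)] jq(1) by simp
  then show ?thesis using jq by (simp add: belt_perm_def slot_less)
qed

lemma inj_on_belt_perm:
  assumes "\<sigma> permutes {..<m}"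
  shows "inj_on (belt_perm v a \<sigma>) {..<v * m}"
proof (rule inj_onI)
  fix t t' assume "t \<in> {..<v * m}" "t' \<in> {..<v * m}" and eq: "belt_perm v a \<sigma> t = belt_perm v a \<sigma> t'"
  then have "0 < v" by (cases v) auto
  then have "\<sigma> (t div v) = \<sigma> (t' div v)"
      and mods: "(t mod v + a (t div v)) mod v = (t' mod v + a (t' div v)) mod v"
    using arg_cong[OF eq, of "\<lambda>x. x div v"] arg_cong[OF eq, of "\<lambda>x. x mod v"]
    by (simp_all add: belt_perm_def)
  then have jeq: "t div v = t' div v" using permutes_inj[OF assms] by (simp add: inj_eq)
  moreover have "t mod v = t' mod v"
    using mod_add_right_cancel_less[OF mods[unfolded jeq]] \<open>0 < v\<close> by simp
  ultimately show "t = t'" by (metis div_mult_mod_eq)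
qed

lemma block_position:
  assumes "0 < p" "p \<le> sum_list (map block_size bs)"
  obtains i v m b t where "i < length bs" "bs ! i = (v, m, b)" "t < v * m"
    "p = block_offset bs i + 1 + t"
proof -
  obtain i where i: "i < length bs" "block_offset bs i < p" "p \<le> block_offset bs i + block_size (bs ! i)"
    using block_index_exists[of 0 p bs] assms by auto
  obtain v m b where "bs ! i = (v, m, b)" by (cases "bs ! i")
  then show ?thesis using i by (intro that[of i v m b "p - block_offset bs i - 1"]) (auto simp: block_size_def)
qed

lemma underlying_perm_emb_block:
  assumes hs: "hs \<in> block_tuples bs" and i: "i < length bs" "bs ! i = (v, m, b)"
    and h: "hs ! i = (s, a, \<sigma>)" and t: "t < v * m" and p: "block_offset bs i + 1 + t \<le> n"
  shows "underlying_perm n (emb bs hs) (block_offset bs i + 1 + t) = block_offset bs i + 1 + belt_perm v a \<sigma> t"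
proof -
  obtain j q where "j < m" "q < v" "t = j * v + q" using t by (rule slot_decomp)
  then have "s (t div v) \<in> {-1, 1}"
    using BsetD(2)[of s a \<sigma> v m j] block_tuples_nth[OF hs i] h by simp
  then show ?thesis
    using emb_in_block[OF block_tuples_length[OF hs] i t] p h
    by (auto simp: underlying_perm_def act_block_eq)
qed

lemma underlying_perm_emb_position:
  assumes hs: "hs \<in> block_tuples bs" and n: "sum_list (map block_size bs) = n" and p: "p \<in> {1..n}"
  obtains i v m b s a \<sigma> t where "i < length bs" "bs ! i = (v, m, b)" "hs ! i = (s, a, \<sigma>)"
    "\<sigma> permutes {..<m}" "t < v * m" "p = block_offset bs i + 1 + t"
    "underlying_perm n (emb bs hs) p = block_offset bs i + 1 + belt_perm v a \<sigma> t"
proof -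
  have "0 < p" "p \<le> sum_list (map block_size bs)" using p n by auto
  then obtain i v m b t where B: "i < length bs" "bs ! i = (v, m, b)" "t < v * m"
      "p = block_offset bs i + 1 + t"
    by (rule block_position)
  obtain s a \<sigma> where h: "hs ! i = (s, a, \<sigma>)" by (cases "hs ! i")
  have "\<sigma> permutes {..<m}" using BsetD(1) block_tuples_nth[OF hs B(1,2)] h by simp
  then show ?thesis
    using that[OF B(1,2) h _ B(3,4)] underlying_perm_emb_block[OF hs B(1,2) h B(3)] B(4) p by simp
qed

lemma underlying_perm_emb_permutes:
  assumes hs: "hs \<in> block_tuples bs" and n: "sum_list (map block_size bs) = n"
  shows "underlying_perm n (emb bs hs) permutes {1..n}"
proof (rule inj_imp_permutes)
  let ?f = "underlying_perm n (emb bs hs)"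
  show "?f p \<in> {1..n}" if p: "p \<in> {1..n}" for p
  proof -
    obtain i v m b s a \<sigma> t where "i < length bs" "bs ! i = (v, m, b)" "\<sigma> permutes {..<m}" "t < v * m"
        "?f p = block_offset bs i + 1 + belt_perm v a \<sigma> t"
      using underlying_perm_emb_position[OF hs n p] by metis
    then show ?thesis
      using block_offset_add_size_le_total[of i bs] belt_perm_less[of \<sigma> m t v a] n
      by (simp add: block_size_def)
  qed
  show "inj_on ?f {1..n}"
  proof (rule inj_onI)
    fix p p' assume p: "p \<in> {1..n}" and p': "p' \<in> {1..n}" and eq: "?f p = ?f p'"
    obtain i v m b s a \<sigma> t where B: "i < length bs" "bs ! i = (v, m, b)" "hs ! i = (s, a, \<sigma>)"
        "\<sigma> permutes {..<m}" "t < v * m" "p = block_offset bs i + 1 + t"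
        "?f p = block_offset bs i + 1 + belt_perm v a \<sigma> t"
      using underlying_perm_emb_position[OF hs n p] by blast
    obtain i' v' m' b' s' a' \<sigma>' t' where B': "i' < length bs" "bs ! i' = (v', m', b')"
        "hs ! i' = (s', a', \<sigma>')" "\<sigma>' permutes {..<m'}" "t' < v' * m'" "p' = block_offset bs i' + 1 + t'"
        "?f p' = block_offset bs i' + 1 + belt_perm v' a' \<sigma>' t'"
      using underlying_perm_emb_position[OF hs n p'] by blast
    have "belt_perm v a \<sigma> t < v * m" "belt_perm v' a' \<sigma>' t' < v' * m'"
      using belt_perm_less B(4,5) B'(4,5) by blast+
    then have "i = i'"
      using block_index_unique[OF B(1) B'(1), of "?f p"] B B' eq by (simp add: block_size_def)
    then have "v' = v" "m' = m" "a' = a" "\<sigma>' = \<sigma>" "i' = i" using B B' by auto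
    then have "t = t'"
      using inj_onD[OF inj_on_belt_perm[OF B(4)]] B B' eq by simp
    then show "p = p'" using B(6) B'(6) \<open>i = i'\<close> by simp
  qed
qed (auto simp: underlying_perm_def)

section \<open>Shifting rotates a segment\<close>

definition rotate_segment :: "nat \<Rightarrow> nat \<Rightarrow> nat \<Rightarrow> nat \<Rightarrow> nat" where
  "rotate_segment off v c x = (if off < x \<and> x \<le> off + v then off + 1 + (x - off - 1 + c) mod v else x)"

lemma rotate_segment_outside:
  "\<not> (off < x \<and> x \<le> off + v) \<Longrightarrow> rotate_segment off v c x = x"
  unfolding rotate_segment_def by (rule if_not_P)

lemma rotate_segment_in:
  "off < x \<Longrightarrow> x \<le> off + v \<Longrightarrow> off < rotate_segment off v c x \<and> rotate_segment off v c x \<le> off + v"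
  by (auto simp: rotate_segment_def Suc_le_eq)

lemma rotate_segment_rotate_segment:
  "rotate_segment off v c (rotate_segment off v d x) = rotate_segment off v (d + c) x"
proof (cases "off < x \<and> x \<le> off + v")
  case True
  define r where "r = (x - off - 1 + d) mod v"
  have "0 < v" using True by auto
  then have "r < v" by (simp add: r_def)
  have "rotate_segment off v d x = off + 1 + r" using True by (simp add: rotate_segment_def r_def)
  then have "rotate_segment off v c (rotate_segment off v d x) = off + 1 + (r + c) mod v"
    using \<open>r < v\<close> by (simp add: rotate_segment_def)
  also have "(r + c) mod v = (x - off - 1 + (d + c)) mod v"
    by (simp add: r_def mod_add_left_eq add.assoc)
  finally show ?thesis using True by (simp add: rotate_segment_def)
next
  case False
  then show ?thesis by (simp add: rotate_segment_outside)
qed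

lemma rotate_segment_permutes: "rotate_segment off v c permutes {off + 1..off + v}"
proof (rule inj_imp_permutes)
  show "inj_on (rotate_segment off v c) {off + 1..off + v}"
  proof (rule inj_onI)
    fix x y assume "x \<in> {off + 1..off + v}" "y \<in> {off + 1..off + v}"
      and "rotate_segment off v c x = rotate_segment off v c y"
    then have "(x - off - 1 + c) mod v = (y - off - 1 + c) mod v" "x - off - 1 < v" "y - off - 1 < v"
      by (auto simp: rotate_segment_def)
    then have "x - off - 1 = y - off - 1" by (rule mod_add_right_cancel_less)
    then show "x = y" using \<open>x \<in> _\<close> \<open>y \<in> _\<close> by auto
  qed
qed (use rotate_segment_in in \<open>auto simp: rotate_segment_def\<close>)

lemma sign_rotate_segment_double: "sign (rotate_segment off v (2 * c)) = 1"
proof -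
  have "rotate_segment off v (2 * c) = rotate_segment off v c \<circ> rotate_segment off v c"
    by (simp add: fun_eq_iff rotate_segment_rotate_segment mult_2)
  moreover have "permutation (rotate_segment off v c)"
    using rotate_segment_permutes by (auto simp: permutation_permutes)
  ultimately show ?thesis
    by (simp add: sign_compose)
qed

lemma act_block_shift_a0:
  assumes "0 < v"
  shows "act_block v (shift_a0 v c h) off t = act_block v h off (if t < v then (t + c) mod v else t)"
proof -
  obtain s a \<sigma> where h: "h = (s, a, \<sigma>)" by (cases h)
  show ?thesis
  proof (cases "t < v")
    case True
    then have "(t + (a 0 + c) mod v) mod v = ((t + c) mod v + a 0) mod v"
      by (simp add: mod_add_left_eq mod_add_right_eq ac_simps)
    then show ?thesis using True by (simp add: h shift_a0_def act_block_def)
  next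
    case False
    then have "t div v \<noteq> 0" using assms by (simp add: div_eq_0_iff)
    then show ?thesis using False by (simp add: h shift_a0_def act_block_def)
  qed
qed

lemma emb_list_update_outside_block:
  assumes "length hs = length bs" "i0 < length bs" "0 < p"
    and "\<not> (block_offset bs i0 < p \<and> p \<le> block_offset bs i0 + block_size (bs ! i0))"
  shows "emb bs (hs[i0 := h']) (int p) = emb bs hs (int p)"
proof (cases "p \<le> sum_list (map block_size bs)")
  case True
  then obtain i v m b t where B: "i < length bs" "bs ! i = (v, m, b)" "t < v * m"
      "p = block_offset bs i + 1 + t"
    using block_position[of p bs] assms(3) by blast
  then have "i \<noteq> i0" using assms(4) by (auto simp: block_size_def)
  then show ?thesis
    using emb_in_block[OF _ B(1-3), of "hs[i0 := h']"] emb_in_block[OF _ B(1-3), of hs] assms(1) B(4)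
    by simp
qed (simp add: emb_beyond_blocks)

lemma emb_shift_tuple:
  assumes hs: "hs \<in> block_tuples bs" and i0: "i0 < length bs" "bs ! i0 = (v, m, b)" "0 < m"
    and "0 < p"
  shows "emb bs (shift_tuple i0 v c hs) (int p) = emb bs hs (int (rotate_segment (block_offset bs i0) v c p))"
proof (cases "block_offset bs i0 < p \<and> p \<le> block_offset bs i0 + v * m")
  case True
  let ?O = "block_offset bs i0"
  define t where "t = p - ?O - 1"
  define t' where "t' = (if t < v then (t + c) mod v else t)"
  have t: "t < v * m" "p = ?O + 1 + t" using True by (auto simp: t_def)
  have "0 < v" using t(1) by (cases v) auto
  moreover have "v \<le> v * m" using i0(3) by simp
  moreover have "(t + c) mod v < v" using \<open>0 < v\<close> by simp
  ultimately have t': "t' < v * m" "rotate_segment ?O v c p = ?O + 1 + t'"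
    using t by (auto simp: t'_def rotate_segment_def intro: less_le_trans)
  have len: "length (shift_tuple i0 v c hs) = length bs" "length hs = length bs"
    using block_tuples_length[OF hs] by (simp_all add: shift_tuple_def)
  have "emb bs (shift_tuple i0 v c hs) (int p) = act_block v (shift_a0 v c (hs ! i0)) ?O t"
    using emb_in_block[OF len(1) i0(1,2) t(1)] t(2) i0(1) len(2) by (simp add: shift_tuple_def)
  also have "\<dots> = act_block v (hs ! i0) ?O t'" by (simp add: act_block_shift_a0 \<open>0 < v\<close> t'_def)
  also have "\<dots> = emb bs hs (int (rotate_segment ?O v c p))"
    using emb_in_block[OF len(2) i0(1,2) t'(1)] t'(2) by simp
  finally show ?thesis .
next
  case False
  have "v \<le> v * m" using i0(3) by simp
  with False have "\<not> (block_offset bs i0 < p \<and> p \<le> block_offset bs i0 + v)" by linarith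
  then have "rotate_segment (block_offset bs i0) v c p = p" by (rule rotate_segment_outside)
  then show ?thesis
    using emb_list_update_outside_block[OF block_tuples_length[OF hs] i0(1) \<open>0 < p\<close>] False i0(2)
    by (simp add: shift_tuple_def block_size_def)
qed

lemma eps_n_shift_tuple:
  assumes hs: "hs \<in> block_tuples bs" and i0: "i0 < length bs" "bs ! i0 = (v, m, b)" "0 < m"
    and n: "sum_list (map block_size bs) = n"
  shows "eps_n n (emb bs (shift_tuple i0 v (2 * d) hs)) = eps_n n (emb bs hs)"
proof -
  let ?R = "rotate_segment (block_offset bs i0) v (2 * d)"
  let ?f = "underlying_perm n (emb bs hs)"
  have "v \<le> v * m" using i0(3) by simp
  moreover have "block_offset bs i0 + v * m \<le> n"
    using block_offset_add_size_le_total[OF i0(1)] i0(2) n by (simp add: block_size_def)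
  ultimately have seg: "block_offset bs i0 + v \<le> n" by linarith
  have "underlying_perm n (emb bs (shift_tuple i0 v (2 * d) hs)) = ?f \<circ> ?R"
  proof
    fix x
    show "underlying_perm n (emb bs (shift_tuple i0 v (2 * d) hs)) x = (?f \<circ> ?R) x"
    proof (cases "1 \<le> x \<and> x \<le> n")
      case True
      then have "1 \<le> ?R x \<and> ?R x \<le> n"
        using rotate_segment_in[of "block_offset bs i0" x v "2 * d"] seg
        by (cases "block_offset bs i0 < x \<and> x \<le> block_offset bs i0 + v") (auto simp: rotate_segment_def)
      then show ?thesis
        using True emb_shift_tuple[OF hs i0, of x "2 * d"] by (simp add: underlying_perm_def)
    next
      case False
      then have "?R x = x" using seg by (auto simp: rotate_segment_def)
      then show ?thesis using False by (auto simp: underlying_perm_def)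
    qed
  qed
  moreover have "permutation ?f" "permutation ?R"
    using underlying_perm_emb_permutes[OF hs n] rotate_segment_permutes
    by (auto simp: permutation_permutes)
  ultimately show ?thesis
    by (simp add: eps_n_def sign_compose sign_rotate_segment_double)
qed

section \<open>The characters \<open>\<psi>\<close> and \<open>\<epsilon>\<close>\<close>

lemma prod_list_update_mult:
  fixes xs :: "'a::comm_monoid_mult list"
  shows "i < length xs \<Longrightarrow> prod_list (xs[i := xs ! i * z]) = prod_list xs * z"
proof (induction xs arbitrary: i)
  case (Cons x xs)
  then show ?case by (cases i) (simp_all add: ac_simps)
qed simp

lemma prod_list_map_zip_update:
  fixes f :: "_ \<Rightarrow> 'a::comm_monoid_mult"
  assumes "length hs = length bs" "i < length bs" "f (bs ! i, h') = f (bs ! i, hs ! i) * z"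
  shows "prod_list (map f (zip bs (hs[i := h']))) = prod_list (map f (zip bs hs)) * z"
proof -
  have "map f (zip bs (hs[i := h'])) = (map f (zip bs hs))[i := f (bs ! i, h')]"
    using zip_update[of bs i "bs ! i" hs h'] by (simp add: map_update)
  also have "f (bs ! i, h') = map f (zip bs hs) ! i * z" using assms by simp
  finally have "map f (zip bs (hs[i := h'])) = (map f (zip bs hs))[i := map f (zip bs hs) ! i * z]" .
  then show ?thesis using prod_list_update_mult[of i "map f (zip bs hs)" z] assms(1,2) by simp
qed

lemma cis_power_mod: "0 < v \<Longrightarrow> cis (2 * pi / real v) ^ (k mod v) = cis (2 * pi / real v) ^ k"
proof -
  assume "0 < v"
  let ?w = "cis (2 * pi / real v)"
  have "?w ^ k = ?w ^ (v * (k div v) + k mod v)" by simp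
  also have "\<dots> = (?w ^ v) ^ (k div v) * ?w ^ (k mod v)" by (simp only: power_add power_mult)
  also have "?w ^ v = 1" using \<open>0 < v\<close> by (simp add: DeMoivre)
  finally show ?thesis by simp
qed

lemma cis_power_neq_1:
  assumes "0 < v" "\<not> v dvd c"
  shows "cis (2 * pi / real v) ^ c \<noteq> 1"
proof -
  let ?f = "\<lambda>k. cis (2 * pi * real k / real v)"
  have "inj_on ?f {..<v}" using bij_betw_roots_unity[OF assms(1)] by (simp add: bij_betw_def)
  then have "?f (c mod v) \<noteq> ?f 0"
    using inj_on_eq_iff[of ?f "{..<v}" "c mod v" 0] assms by (simp add: dvd_eq_mod_eq_0)
  moreover have "cis (2 * pi / real v) ^ c = ?f (c mod v)"
    using cis_power_mod[OF assms(1), of c] by (simp add: DeMoivre mult.commute)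
  ultimately show ?thesis by simp
qed

lemma cis_power_sum_shift_a0:
  fixes a :: "nat \<Rightarrow> nat"
  assumes "0 < m" "0 < v"
  shows "cis (2 * pi / real v) ^ (\<Sum>i<m. (a(0 := (a 0 + c) mod v)) i)
           = cis (2 * pi / real v) ^ (\<Sum>i<m. a i) * cis (2 * pi / real v) ^ c"
proof -
  define r where "r = (\<Sum>i\<in>{..<m} - {0}. a i)"
  have zero: "0 \<in> {..<m}" using assms(1) by simp
  have "(\<Sum>i\<in>{..<m} - {0}. (a(0 := (a 0 + c) mod v)) i) = r"
    unfolding r_def by (rule sum.cong) auto
  then have "(\<Sum>i<m. (a(0 := (a 0 + c) mod v)) i) = (a 0 + c) mod v + r"
      "(\<Sum>i<m. a i) = a 0 + r"
    using sum.remove[OF finite_lessThan zero, of "a(0 := (a 0 + c) mod v)"]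
      sum.remove[OF finite_lessThan zero, of a]
    by (simp_all only: r_def fun_upd_same)
  then show ?thesis
    using cis_power_mod[OF assms(2), of "a 0 + c"] by (simp add: power_add ac_simps)
qed

lemma psi_shift_tuple:
  assumes "length hs = length bs" "i0 < length bs" "bs ! i0 = (v, m, b)" "0 < m" "0 < v"
  shows "psi bs (shift_tuple i0 v c hs) = psi bs hs * cis (2 * pi / real v) ^ c"
proof -
  obtain s a \<sigma> where "hs ! i0 = (s, a, \<sigma>)" by (cases "hs ! i0")
  then show ?thesis
    unfolding psi_def shift_tuple_def
    using assms cis_power_sum_shift_a0[OF assms(4,5)]
    by (intro prod_list_map_zip_update) (simp_all add: shift_a0_def)
qed

lemma epsH_shift_tuple:
  assumes "length hs = length bs" "i0 < length bs"
  shows "epsH bs (shift_tuple i0 v c hs) = epsH bs hs"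
proof -
  obtain s a \<sigma> where "hs ! i0 = (s, a, \<sigma>)" by (cases "hs ! i0")
  then show ?thesis
    unfolding epsH_def shift_tuple_def
    using assms
    by (intro prod_list_map_zip_update[where z = 1, simplified]) (simp_all add: shift_a0_def split: prod.split)
qed

lemma not_power_of_two_odd_factor:
  fixes v :: nat
  assumes "0 < v" "\<nexists>k. v = 2 ^ k"
  obtains d q where "v = d * q" "odd q" "\<not> v dvd 2 * d"
proof -
  have "\<exists>e q. v = 2 ^ e * q \<and> odd q \<and> 1 < q"
    using assms
  proof (induction v rule: less_induct)
    case (less v)
    show ?case
    proof (cases "even v")
      case True
      then obtain w where w: "v = 2 * w" by blast
      then have "0 < w" "w < v" "\<nexists>k. w = 2 ^ k"
        using less.prems by (auto simp flip: power_Suc)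
      then obtain e q where "w = 2 ^ e * q" "odd q" "1 < q" using less.IH by blast
      then show ?thesis using w by (intro exI[of _ "Suc e"] exI[of _ q]) simp
    next
      case False
      have "v \<noteq> 1" using less.prems(2) by (metis power_0)
      then show ?thesis using False less.prems(1) by (intro exI[of _ 0] exI[of _ v]) simp
    qed
  qed
  then obtain e q where eq: "v = 2 ^ e * q" "odd q" "1 < q" by blast
  have "\<not> v dvd 2 * 2 ^ e"
  proof
    assume "v dvd 2 * 2 ^ e"
    then have "q dvd 2" using eq(1) by (simp add: mult.commute)
    then have "q \<le> 2" by (simp add: dvd_imp_le)
    then show False using eq(2,3) by presburger
  qed
  then show ?thesis using eq by (intro that[of "2 ^ e" q]) simp_all
qed

lemma sum_mset_eq_sum_count:
  fixes l :: "nat multiset"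
  assumes "finite A" "set_mset l \<subseteq> A"
  shows "sum_mset l = (\<Sum>y\<in>A. y * count l y)"
  using assms(2)
proof (induction l)
  case (add x l)
  have "(\<Sum>y\<in>A. y * count (add_mset x l) y) = (\<Sum>y\<in>A. y * count l y + (if y = x then x else 0))"
    by (rule sum.cong) auto
  also have "\<dots> = (\<Sum>y\<in>A. y * count l y) + x" using add.prems assms(1) by (simp add: sum.distrib)
  finally show ?case using add by simp
qed simp

lemma sum_list_block_size_blocks:
  "sum_list (map block_size (blocks l1 l2)) = sum_mset l1 + sum_mset l2"
proof -
  have "sum_list (map block_size (map (\<lambda>v. (v, count l v, b)) (sorted_list_of_set (set_mset l)))) = sum_mset l"
    for l b
    using sum_mset_eq_sum_count[of "set_mset l" l]
    by (simp add: block_size_def comp_def sum_list_distinct_conv_sum_set)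
  then show ?thesis by (simp add: blocks_def)
qed

lemma blocks_member:
  assumes "v \<in># l1 \<or> v \<in># l2"
  obtains i0 m b where "i0 < length (blocks l1 l2)" "blocks l1 l2 ! i0 = (v, m, b)" "0 < m"
proof -
  let ?L1 = "sorted_list_of_set (set_mset l1)" and ?L2 = "sorted_list_of_set (set_mset l2)"
  show ?thesis
  proof (cases "v \<in># l1")
    case True
    then obtain i where "i < length ?L1" "?L1 ! i = v" by (metis in_set_conv_nth finite_set_mset set_sorted_list_of_set)
    then show ?thesis using True by (intro that[of i]) (auto simp: blocks_def nth_append)
  next
    case False
    then have "v \<in># l2" using assms by simp
    then obtain i where "i < length ?L2" "?L2 ! i = v" by (metis in_set_conv_nth finite_set_mset set_sorted_list_of_set)
    then show ?thesis using \<open>v \<in># l2\<close> by (intro that[of "length ?L1 + i"]) (auto simp: blocks_def nth_append)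
  qed
qed

definition inner_summand :: "nat \<Rightarrow> (nat \<times> nat \<times> bool) list \<Rightarrow> belt list \<Rightarrow> complex" where
  "inner_summand n bs hs = (if chi n (emb bs hs) then 1 else 0) *
     cnj (of_int (eps_n n (emb bs hs)) * of_int (epsH bs hs) * psi bs hs)"

lemma inner_H_eq:
  "inner_H n l1 l2 = 1 / of_nat (card (Hset l1 l2)) *
     (\<Sum>hs\<in>block_tuples (blocks l1 l2). inner_summand n (blocks l1 l2) hs)"
  by (simp add: inner_H_def inner_summand_def Hset_eq_block_tuples Let_def)

lemma inner_summand_shift_tuple:
  assumes hs: "hs \<in> block_tuples bs" and i0: "i0 < length bs" "bs ! i0 = (v, m, b)" "0 < m"
    and "0 < v" "v = d * q" "odd q" and n: "sum_list (map block_size bs) = n"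
  shows "inner_summand n bs (shift_tuple i0 v (2 * d) hs) =
           inner_summand n bs hs * cnj (cis (2 * pi / real v) ^ (2 * d))"
  using chi_shift_tuple[OF hs i0 assms(7,6)] eps_n_shift_tuple[OF hs i0 n]
    epsH_shift_tuple[OF block_tuples_length[OF hs] i0(1)]
    psi_shift_tuple[OF block_tuples_length[OF hs] i0 assms(5)]
  by (simp add: inner_summand_def)

lemma sum_eq_0_if_bij_betw_scales:
  fixes f :: "'a \<Rightarrow> 'b::field"
  assumes "bij_betw T A A" "\<And>x. x \<in> A \<Longrightarrow> f (T x) = f x * z" "z \<noteq> 1"
  shows "sum f A = 0"
proof -
  have "sum f A = sum (f \<circ> T) A" using sum.reindex_bij_betw[OF assms(1), of f] by simp
  also have "\<dots> = sum f A * z" using assms(2) by (simp add: sum_distrib_right)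
  finally have "sum f A * (1 - z) = 0" by (simp add: algebra_simps)
  then show ?thesis using assms(3) by simp
qed

theorem proposition14:
  fixes n :: nat and l1 l2 :: "nat multiset"
  assumes "n \<ge> 1"
    and "is_partition l1" and "is_partition l2"
    and "sum_mset l1 + sum_mset l2 = n"
    and "inner_H n l1 l2 \<noteq> 0"
  shows "(\<forall>v\<in>#l1. \<exists>k::nat. v = 2 ^ k) \<and> (\<forall>v\<in>#l2. \<exists>k::nat. v = 2 ^ k)"
proof (rule ccontr)
  assume "\<not> ?thesis"
  then obtain v where v: "v \<in># l1 \<or> v \<in># l2" "\<nexists>k. v = 2 ^ k" by blast
  then have "0 < v" using assms(2,3) by (auto simp: is_partition_def intro: gr0I)
  then obtain d q where dq: "v = d * q" "odd q" "\<not> v dvd 2 * d"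
    using v(2) by (rule not_power_of_two_odd_factor)
  obtain i0 m b where i0: "i0 < length (blocks l1 l2)" "blocks l1 l2 ! i0 = (v, m, b)" "0 < m"
    using v(1) by (rule blocks_member)
  have scale: "cnj (cis (2 * pi / real v) ^ (2 * d)) \<noteq> 1"
    using cis_power_neq_1[OF \<open>0 < v\<close> dq(3)] by (metis complex_cnj_cnj complex_cnj_one)
  have size: "sum_list (map block_size (blocks l1 l2)) = n"
    using sum_list_block_size_blocks assms(4) by simp
  have "(\<Sum>hs\<in>block_tuples (blocks l1 l2). inner_summand n (blocks l1 l2) hs) = 0"
    by (rule sum_eq_0_if_bij_betw_scales[where f = "inner_summand n (blocks l1 l2)",
          OF bij_betw_shift_tuple[OF i0 \<open>0 < v\<close>, of "2 * d"]
          inner_summand_shift_tuple[OF _ i0 \<open>0 < v\<close> dq(1,2) size] scale])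
  then have "inner_H n l1 l2 = 0" by (simp only: inner_H_eq mult_zero_right)
  with assms(5) show False by contradiction
qed

end
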